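(* Let $(X_t)_{t\ge1}$ be random variables in $[0,1]$ with average conditional means $(\mu_t)$, and let $(\widehat X_t)$ be a predictable sequence in $[0,1)$. Let $h:[0,\infty)\to(0,\infty)$ be nondecreasing with $\sum_{j=0}^\infty 1/h(j)\le1$. Fix $\eta>1$, $\alpha\in(0,1)$ and $L_0\ge1$, and let $V_t=\sum_{i\le t}\psi_E(|X_i-\widehat X_i|)$ and $\overline X_t=t^{-1}\sum_{i\le t}X_i$. Then, with probability at least $1-\alpha$, simultaneously for all $t\ge1$ such that $L_0\le V_t<\infty$ and $h(\log_\eta(V_t/L_0))\le\frac{\alpha}{2}\exp(V_t)$, we have \[ |\overline X_t-\mu_t|\le\frac{\sqrt\eta+1}{t}\sqrt{V_t\left(\log\frac{2}{\alpha}+\log h\Big(\log_\eta\frac{V_t}{L_0}\Big)\right)} . \]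
   Context: $\mathcal F_t=\sigma(X_1,\dots,X_t)$, and $\mathcal F_0$ is trivial. A sequence is predictable if its $t$-th term is $\mathcal F_{t-1}$-measurable. The average conditional mean is $\mu_t:=t^{-1}\sum_{j\le t}\mathbb{E}[X_j\mid\mathcal F_{j-1}]$. $\psi_E(x)=-\log(1-x)-x$ for $x\in[0,1)$, and $\psi_E(1):=+\infty$. *)

theory Defs
  imports "HOL-Probability.Probability"
begin

definition nat_filtration :: "'a measure \<Rightarrow> (nat \<Rightarrow> 'a \<Rightarrow> real) \<Rightarrow> nat \<Rightarrow> 'a measure" where
  "nat_filtration M X t =
     sigma (space M) (\<Union>i\<in>{1..t}. {X i -` A \<inter> space M | A. A \<in> sets borel})"

definition avg_cond_mean :: "'a measure \<Rightarrow> (nat \<Rightarrow> 'a \<Rightarrow> real) \<Rightarrow> nat \<Rightarrow> 'a \<Rightarrow> real" where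
  "avg_cond_mean M X t \<omega> =
     (\<Sum>j\<in>{1..t}. real_cond_exp M (nat_filtration M X (j - 1)) (X j) \<omega>) / real t"

definition psiE :: "real \<Rightarrow> ereal" where
  "psiE x = (if x < 1 then ereal (- ln (1 - x) - x) else \<infinity>)"

definition Vsum :: "(nat \<Rightarrow> 'a \<Rightarrow> real) \<Rightarrow> (nat \<Rightarrow> 'a \<Rightarrow> real) \<Rightarrow> nat \<Rightarrow> 'a \<Rightarrow> ereal" where
  "Vsum X Xh t \<omega> = (\<Sum>i\<in>{1..t}. psiE \<bar>X i \<omega> - Xh i \<omega>\<bar>)"

definition emp_mean :: "(nat \<Rightarrow> 'a \<Rightarrow> real) \<Rightarrow> nat \<Rightarrow> 'a \<Rightarrow> real" where
  "emp_mean X t \<omega> = (\<Sum>i\<in>{1..t}. X i \<omega>) / real t"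

end

theory Submission
  imports Defs
begin

(* For a rate g with |g| < 1, Fan's inequality exp(u - psi_E |u|) <= 1 + u (for |u| < 1) makes
     exp (sum_{i<=t} g (X_i - E[X_i | F_{i-1}]) - psi_E |g (X_i - Xhat_i)|)
   a nonnegative supermartingale: as Xhat_i is predictable, conditioning turns 1 + g (X_i - Xhat_i)
   into 1 + g (E[X_i | F_{i-1}] - Xhat_i) <= exp (g (E[X_i | F_{i-1}] - Xhat_i)).  By Ville's
   inequality it ever exceeds c with probability at most 1/c, and psi_E (l y) <= l^2 psi_E y then
   gives l |S_t| < ln c + l^2 V_t for both signs g = l, -l, where S_t = t (Xbar_t - mu_t).
   Epoch k, which contains V_t in [L0 eta^k, L0 eta^(k+1)), uses c = 2 h(k) / alpha and the rate
   l = sqrt (ln c / (L0 eta^(k+1))) tuned to the upper end of the epoch; this loses the factor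
   sqrt eta, and the union bound over all epochs costs sum_k alpha / h(k) <= alpha. *)

section \<open>The function \<open>\<psi>\<^sub>E\<close>\<close>

definition psiE_real :: "real \<Rightarrow> real" where
  "psiE_real y = - ln (1 - y) - y"

lemma psiE_eq_psiE_real: "x < 1 \<Longrightarrow> psiE x = ereal (psiE_real x)"
  by (simp add: psiE_def psiE_real_def)

lemma psiE_real_nonneg: "y < 1 \<Longrightarrow> 0 \<le> psiE_real y"
  using ln_le_minus_one[of "1 - y"] by (simp add: psiE_real_def)

lemma psiE_real_sums:
  assumes "\<bar>y\<bar> < 1"
  shows "(\<lambda>n. if n < 2 then 0 else y ^ n / real n) sums psiE_real y"
proof -
  have "(\<lambda>n. - ((- (- y)) ^ n) / real n) sums ln (1 + - y)"
    by (rule ln_series') (use assms in simp)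
  then have "(\<lambda>n. y ^ n / real n) sums (- ln (1 - y))"
    using sums_minus by fastforce
  then have "(\<lambda>n. y ^ n / real n - (if n = 1 then y else 0)) sums (- ln (1 - y) - y)"
    using sums_single[of 1 "\<lambda>_. y"] by (rule sums_diff)
  moreover have "(\<lambda>n. y ^ n / real n - (if n = 1 then y else 0))
      = (\<lambda>n. if n < 2 then 0 else y ^ n / real n)"
    by (auto simp: fun_eq_iff less_2_cases_iff)
  ultimately show ?thesis
    by (simp add: psiE_real_def)
qed

lemma psiE_real_minus_le:
  assumes "0 \<le> y" "y < 1"
  shows "psiE_real (- y) \<le> psiE_real y"
proof (rule sums_le[OF _ psiE_real_sums psiE_real_sums])
  fix n :: nat
  have "(- y) ^ n \<le> y ^ n"
    using assms by (cases "even n") auto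
  then show "(if n < 2 then 0 else (- y) ^ n / real n) \<le> (if n < 2 then 0 else y ^ n / real n)"
    by (simp add: divide_right_mono)
qed (use assms in auto)

lemma exp_sub_psiE_real_le:
  assumes "\<bar>u\<bar> < 1"
  shows "exp (u - psiE_real \<bar>u\<bar>) \<le> 1 + u"
proof -
  have "psiE_real (- u) \<le> psiE_real \<bar>u\<bar>"
    using psiE_real_minus_le[of u] assms by (cases "0 \<le> u") auto
  then have "exp (u - psiE_real \<bar>u\<bar>) \<le> exp (u - psiE_real (- u))"
    by simp
  also have "\<dots> = 1 + u"
    using assms by (simp add: psiE_real_def)
  finally show ?thesis .
qed

lemma psiE_real_mult_le:
  assumes "0 \<le> y" "y < 1" "0 \<le> l" "l \<le> 1"
  shows "psiE_real (l * y) \<le> l\<^sup>2 * psiE_real y"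
proof (rule sums_le)
  have "l * y < 1"
    using assms mult_left_le_one_le[of y l] by linarith
  then show "(\<lambda>n. if n < 2 then 0 else (l * y) ^ n / real n) sums psiE_real (l * y)"
    using assms by (intro psiE_real_sums) auto
  show "(\<lambda>n. l\<^sup>2 * (if n < 2 then 0 else y ^ n / real n)) sums (l\<^sup>2 * psiE_real y)"
    using assms by (intro sums_mult psiE_real_sums) auto
  fix n :: nat
  have "l ^ n * y ^ n \<le> l\<^sup>2 * y ^ n" if "2 \<le> n"
    using assms that by (intro mult_right_mono power_decreasing) auto
  then show "(if n < 2 then 0 else (l * y) ^ n / real n) \<le> l\<^sup>2 * (if n < 2 then 0 else y ^ n / real n)"
    by (simp add: power_mult_distrib divide_right_mono)
qed

lemma (in finite_measure) integrable_bounded_real: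
  fixes f :: "'a \<Rightarrow> real"
  assumes "f \<in> borel_measurable M" "\<And>\<omega>. \<omega> \<in> space M \<Longrightarrow> \<bar>f \<omega>\<bar> \<le> B"
  shows "integrable M f"
  using assms by (intro integrable_const_bound[where B = B] AE_I2) auto

lemma (in finite_measure) measure_UN_le_suminf:
  assumes "\<And>k. A k \<in> sets M" "\<And>k. measure M (A k) \<le> a k" "summable a"
  shows "measure M (\<Union>k. A k) \<le> (\<Sum>k. a k)"
proof -
  have "summable (\<lambda>k. measure M (A k))"
    by (rule summable_comparison_test'[OF assms(3)]) (use assms(2) in auto)
  then have "measure M (\<Union>k. A k) \<le> (\<Sum>k. measure M (A k))"
    by (intro finite_measure_subadditive_countably) (use assms(1) in auto)
  also have "\<dots> \<le> (\<Sum>k. a k)"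
    by (rule suminf_le) fact+
  finally show ?thesis .
qed

lemma (in finite_measure) integrable_mult_bounded_real:
  fixes f g :: "'a \<Rightarrow> real"
  assumes "f \<in> borel_measurable M" "g \<in> borel_measurable M"
    and "\<And>\<omega>. \<omega> \<in> space M \<Longrightarrow> \<bar>f \<omega>\<bar> \<le> B" "\<And>\<omega>. \<omega> \<in> space M \<Longrightarrow> \<bar>g \<omega>\<bar> \<le> C"
  shows "integrable M (\<lambda>\<omega>. f \<omega> * g \<omega>)"
proof (rule integrable_bounded_real[where B = "B * C"])
  fix \<omega> assume "\<omega> \<in> space M"
  then show "\<bar>f \<omega> * g \<omega>\<bar> \<le> B * C"
    using assms(3,4) unfolding abs_mult by (intro mult_mono) (auto intro: order_trans[OF abs_ge_zero])
qed (use assms(1,2) in measurable)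

lemma (in prob_space) sigma_finite_subalgebra_of_subalgebra:
  "subalgebra M F \<Longrightarrow> sigma_finite_subalgebra M F"
  by (intro finite_measure_subalgebra_is_sigma_finite) unfold_locales

lemma (in prob_space) integral_mult_cond_exp:
  assumes F: "subalgebra M F"
    and [measurable]: "W \<in> borel_measurable F" "Y \<in> borel_measurable M" "m \<in> borel_measurable M"
    and integrable: "integrable M (\<lambda>\<omega>. W \<omega> * Y \<omega>)"
    and m_AE: "AE \<omega> in M. m \<omega> = real_cond_exp M F Y \<omega>"
  shows "(\<integral>\<omega>. W \<omega> * m \<omega> \<partial>M) = (\<integral>\<omega>. W \<omega> * Y \<omega> \<partial>M)"
proof -
  interpret F: sigma_finite_subalgebra M F
    using F by (rule sigma_finite_subalgebra_of_subalgebra)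
  have [measurable]: "W \<in> borel_measurable M"
    by (rule measurable_from_subalg[OF F]) measurable
  have "(\<integral>\<omega>. W \<omega> * m \<omega> \<partial>M) = (\<integral>\<omega>. W \<omega> * real_cond_exp M F Y \<omega> \<partial>M)"
    using m_AE by (intro integral_cong_AE) auto
  also have "\<dots> = (\<integral>\<omega>. W \<omega> * Y \<omega> \<partial>M)"
    by (rule F.real_cond_exp_intg(2)[OF integrable]) measurable
  finally show ?thesis .
qed

section \<open>Ville's inequality\<close>

lemma (in finite_measure) measure_mult_add_integral_le:
  fixes f :: "'a \<Rightarrow> real"
  assumes f: "integrable M f" and G: "G \<in> sets M" and H: "H \<in> sets M"
    and ge: "\<And>\<omega>. \<omega> \<in> H \<Longrightarrow> c \<le> f \<omega>"
  shows "c * measure M (G \<inter> H) + (\<integral>\<omega>. indicator (G - H) \<omega> * f \<omega> \<partial>M)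
    \<le> (\<integral>\<omega>. indicator G \<omega> * f \<omega> \<partial>M)"
proof -
  have int_GH: "integrable M (\<lambda>\<omega>. c * indicator (G \<inter> H) \<omega>)"
    using G H by (intro integrable_mult_right integrable_real_indicator) (auto simp: less_top[symmetric])
  have int_f: "integrable M (\<lambda>\<omega>. indicator A \<omega> * f \<omega>)" if "A \<in> sets M" for A
    using integrable_real_mult_indicator[OF that f] by (simp add: mult.commute)
  have "c * measure M (G \<inter> H) + (\<integral>\<omega>. indicator (G - H) \<omega> * f \<omega> \<partial>M)
      = (\<integral>\<omega>. c * indicator (G \<inter> H) \<omega> + indicator (G - H) \<omega> * f \<omega> \<partial>M)"
    using G H int_GH int_f[of "G - H"] by simp
  also have "\<dots> \<le> (\<integral>\<omega>. indicator G \<omega> * f \<omega> \<partial>M)"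
  proof (rule integral_mono)
    show "integrable M (\<lambda>\<omega>. c * indicator (G \<inter> H) \<omega> + indicator (G - H) \<omega> * f \<omega>)"
      using G H int_GH int_f[of "G - H"] by auto
  qed (use G int_f ge in \<open>auto simp: indicator_def\<close>)
  finally show ?thesis .
qed

locale nonneg_supermartingale = prob_space M for M :: "'a measure" +
  fixes F :: "nat \<Rightarrow> 'a measure" and Z :: "nat \<Rightarrow> 'a \<Rightarrow> real"
  assumes subalgebra: "\<And>n. subalgebra M (F n)"
    and filtration_mono: "\<And>n. sets (F n) \<subseteq> sets (F (Suc n))"
    and adapted: "\<And>n. Z n \<in> borel_measurable (F n)"
    and integrable_Z: "\<And>n. integrable M (Z n)"
    and nonneg: "\<And>n \<omega>. \<omega> \<in> space M \<Longrightarrow> 0 \<le> Z n \<omega>"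
    and supermartingale: "\<And>n D. D \<in> sets (F n) \<Longrightarrow>
      (\<integral>\<omega>. indicator D \<omega> * Z (Suc n) \<omega> \<partial>M) \<le> (\<integral>\<omega>. indicator D \<omega> * Z n \<omega> \<partial>M)"
begin

lemma space_F: "space (F n) = space M"
  and sets_F_subset: "sets (F n) \<subseteq> sets M"
  using subalgebra[of n] by (auto simp: subalgebra_def)

lemma measurable_Z [measurable]: "Z n \<in> borel_measurable M"
  by (rule measurable_from_subalg[OF subalgebra adapted])

lemma adapted_mono:
  assumes "j \<le> n"
  shows "Z j \<in> borel_measurable (F n)"
proof -
  have "sets (F j) \<subseteq> sets (F n)"
    using assms by (induction n rule: dec_induct) (use filtration_mono in auto)
  then show ?thesis
    by (intro measurable_from_subalg[OF _ adapted]) (simp add: subalgebra_def space_F)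
qed

definition crossed_by :: "real \<Rightarrow> nat \<Rightarrow> 'a set" where
  "crossed_by c n = {\<omega>\<in>space M. \<exists>j\<le>n. c \<le> Z j \<omega>}"

lemma crossed_by_sets: "crossed_by c n \<in> sets (F n)"
proof -
  have "crossed_by c n = (\<Union>j\<le>n. {\<omega>\<in>space (F n). c \<le> Z j \<omega>})"
    by (auto simp: crossed_by_def space_F)
  also have "\<dots> \<in> sets (F n)"
    using adapted_mono
    by (intro sets.finite_UN) (auto intro!: measurable_sets_borel[where A = "{c..}", simplified])
  finally show ?thesis .
qed

lemma crossed_by_sets_M: "crossed_by c n \<in> sets M"
  using crossed_by_sets sets_F_subset by blast

text \<open>Once a path has crossed, its contribution \<open>c\<close> is frozen; on the paths that have not
  crossed yet, the supermartingale property carries the bound forward.\<close>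
lemma crossed_by_invariant:
  assumes start: "(\<integral>\<omega>. Z 0 \<omega> \<partial>M) \<le> 1"
  shows "c * measure M (crossed_by c n)
    + (\<integral>\<omega>. indicator (space M - crossed_by c n) \<omega> * Z n \<omega> \<partial>M) \<le> 1"
proof (induction n)
  case 0
  have "crossed_by c 0 = space M \<inter> crossed_by c 0"
    by (auto simp: crossed_by_def)
  moreover have "c * measure M (space M \<inter> crossed_by c 0)
      + (\<integral>\<omega>. indicator (space M - crossed_by c 0) \<omega> * Z 0 \<omega> \<partial>M)
    \<le> (\<integral>\<omega>. indicator (space M) \<omega> * Z 0 \<omega> \<partial>M)"
    using crossed_by_sets_M by (intro measure_mult_add_integral_le integrable_Z) (auto simp: crossed_by_def)
  moreover have "(\<integral>\<omega>. indicator (space M) \<omega> * Z 0 \<omega> \<partial>M) = (\<integral>\<omega>. Z 0 \<omega> \<partial>M)"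
    by (intro Bochner_Integration.integral_cong) auto
  ultimately show ?case
    using start by simp
next
  case (Suc n)
  define G where "G = space M - crossed_by c n"
  define H where "H = {\<omega>\<in>space M. c \<le> Z (Suc n) \<omega>}"
  have G_F: "G \<in> sets (F n)"
    unfolding G_def using crossed_by_sets[of c n] space_F[of n] by (metis sets.compl_sets)
  then have G_M: "G \<in> sets M"
    using sets_F_subset by blast
  have H_M: "H \<in> sets M"
    unfolding H_def by measurable
  have crossed_Suc: "crossed_by c (Suc n) = crossed_by c n \<union> (G \<inter> H)"
    and not_crossed_Suc: "space M - crossed_by c (Suc n) = G - H"
    by (auto simp: crossed_by_def G_def H_def le_Suc_eq)
  have "measure M (crossed_by c (Suc n)) = measure M (crossed_by c n) + measure M (G \<inter> H)"
    unfolding crossed_Suc using crossed_by_sets_M G_M H_M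
    by (intro finite_measure_Union) (auto simp: G_def)
  moreover have "c * measure M (G \<inter> H) + (\<integral>\<omega>. indicator (G - H) \<omega> * Z (Suc n) \<omega> \<partial>M)
      \<le> (\<integral>\<omega>. indicator G \<omega> * Z (Suc n) \<omega> \<partial>M)"
    using G_M H_M by (intro measure_mult_add_integral_le integrable_Z) (auto simp: H_def)
  moreover have "(\<integral>\<omega>. indicator G \<omega> * Z (Suc n) \<omega> \<partial>M) \<le> (\<integral>\<omega>. indicator G \<omega> * Z n \<omega> \<partial>M)"
    by (rule supermartingale[OF G_F])
  ultimately show ?case
    using Suc.IH unfolding not_crossed_Suc G_def by (simp add: algebra_simps)
qed

lemma ville_inequality:
  assumes start: "(\<integral>\<omega>. Z 0 \<omega> \<partial>M) \<le> 1" and c: "0 < c"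
  shows "measure M {\<omega>\<in>space M. \<exists>n. c \<le> Z n \<omega>} \<le> 1 / c"
proof -
  have "measure M (crossed_by c n) \<le> 1 / c" for n
  proof -
    have "0 \<le> (\<integral>\<omega>. indicator (space M - crossed_by c n) \<omega> * Z n \<omega> \<partial>M)"
      by (intro integral_nonneg_AE AE_I2) (simp add: nonneg)
    then show ?thesis
      using crossed_by_invariant[OF start, of c n] c by (simp add: field_simps)
  qed
  moreover have "(\<lambda>n. measure M (crossed_by c n)) \<longlonglongrightarrow> measure M (\<Union>n. crossed_by c n)"
    using crossed_by_sets_M
    by (intro finite_Lim_measure_incseq) (auto simp: incseq_def crossed_by_def intro: order_trans)
  ultimately have "measure M (\<Union>n. crossed_by c n) \<le> 1 / c"
    by (intro LIMSEQ_le_const2) auto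
  moreover have "{\<omega>\<in>space M. \<exists>n. c \<le> Z n \<omega>} = (\<Union>n. crossed_by c n)"
    by (auto simp: crossed_by_def)
  ultimately show ?thesis
    by simp
qed

end

section \<open>The exponential supermartingale\<close>

lemma (in prob_space) integral_affine_le_exp_cond_mean:
  fixes W Y m p :: "'a \<Rightarrow> real"
  assumes F: "subalgebra M F"
    and [measurable]: "W \<in> borel_measurable F" "Y \<in> borel_measurable M"
      "m \<in> borel_measurable F" "p \<in> borel_measurable F"
    and m_AE: "AE \<omega> in M. m \<omega> = real_cond_exp M F Y \<omega>"
    and W: "\<And>\<omega>. \<omega> \<in> space M \<Longrightarrow> 0 \<le> W \<omega> \<and> W \<omega> \<le> B"
    and range: "\<And>\<omega>. \<omega> \<in> space M \<Longrightarrow> Y \<omega> \<in> {0..1} \<and> m \<omega> \<in> {0..1} \<and> p \<omega> \<in> {0..1}"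
    and g: "\<bar>g\<bar> \<le> 1"
  shows "(\<integral>\<omega>. W \<omega> * (1 + g * (Y \<omega> - p \<omega>)) \<partial>M) \<le> (\<integral>\<omega>. W \<omega> * exp (g * (m \<omega> - p \<omega>)) \<partial>M)"
proof -
  have [measurable]: "W \<in> borel_measurable M" "m \<in> borel_measurable M" "p \<in> borel_measurable M"
    by (rule measurable_from_subalg[OF F], measurable)+
  have integrable: "integrable M (\<lambda>\<omega>. W \<omega> * f \<omega>)"
    if "f \<in> borel_measurable M" "\<And>\<omega>. \<omega> \<in> space M \<Longrightarrow> \<bar>f \<omega>\<bar> \<le> K" for f K
    using that W by (intro integrable_mult_bounded_real[where B = B and C = K]) auto
  have bounds: "\<bar>1 - g * p \<omega>\<bar> \<le> 2" "\<bar>exp (g * (m \<omega> - p \<omega>))\<bar> \<le> exp 1"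
    if "\<omega> \<in> space M" for \<omega>
  proof -
    have "\<bar>p \<omega>\<bar> \<le> 1" "\<bar>m \<omega> - p \<omega>\<bar> \<le> 1"
      using range[OF that] by auto
    then have "\<bar>g * p \<omega>\<bar> \<le> 1" "\<bar>g * (m \<omega> - p \<omega>)\<bar> \<le> 1"
      using g unfolding abs_mult by (simp_all add: mult_le_one)
    then show "\<bar>1 - g * p \<omega>\<bar> \<le> 2" "\<bar>exp (g * (m \<omega> - p \<omega>))\<bar> \<le> exp 1"
      by auto
  qed
  have int_Y: "integrable M (\<lambda>\<omega>. W \<omega> * Y \<omega>)" and int_m: "integrable M (\<lambda>\<omega>. W \<omega> * m \<omega>)"
    using range by (auto intro!: integrable[of _ 1])
  have int_p: "integrable M (\<lambda>\<omega>. W \<omega> * (1 - g * p \<omega>))"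
    by (rule integrable[of _ 2]) (use bounds in auto)
  have "W \<omega> * (1 + g * (Y \<omega> - p \<omega>)) = W \<omega> * (1 - g * p \<omega>) + g * (W \<omega> * Y \<omega>)"
    and "W \<omega> * (1 + g * (m \<omega> - p \<omega>)) = W \<omega> * (1 - g * p \<omega>) + g * (W \<omega> * m \<omega>)" for \<omega>
    by (simp_all add: algebra_simps)
  then have "(\<integral>\<omega>. W \<omega> * (1 + g * (Y \<omega> - p \<omega>)) \<partial>M) = (\<integral>\<omega>. W \<omega> * (1 + g * (m \<omega> - p \<omega>)) \<partial>M)"
    using int_Y int_m int_p integral_mult_cond_exp[OF F _ _ _ int_Y m_AE] by simp
  also have "\<dots> \<le> (\<integral>\<omega>. W \<omega> * exp (g * (m \<omega> - p \<omega>)) \<partial>M)"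
  proof (rule integral_mono')
    show "integrable M (\<lambda>\<omega>. W \<omega> * exp (g * (m \<omega> - p \<omega>)))"
      by (rule integrable[of _ "exp 1"]) (use bounds in auto)
  qed (use W in \<open>auto intro: mult_left_mono simp: add.commute\<close>)
  finally show ?thesis .
qed

lemma (in prob_space) integral_mult_exp_fan_le:
  fixes Y m p P :: "'a \<Rightarrow> real"
  assumes F: "subalgebra M F"
    and [measurable]: "Y \<in> borel_measurable M" "m \<in> borel_measurable F"
      "p \<in> borel_measurable F" "P \<in> borel_measurable F"
    and m_AE: "AE \<omega> in M. m \<omega> = real_cond_exp M F Y \<omega>"
    and range: "\<And>\<omega>. \<omega> \<in> space M \<Longrightarrow> Y \<omega> \<in> {0..1} \<and> m \<omega> \<in> {0..1} \<and> p \<omega> \<in> {0..1}"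
    and P: "\<And>\<omega>. \<omega> \<in> space M \<Longrightarrow> 0 \<le> P \<omega> \<and> P \<omega> \<le> B"
    and g: "\<bar>g\<bar> < 1"
  shows "(\<integral>\<omega>. P \<omega> * exp (g * (Y \<omega> - m \<omega>) - psiE_real \<bar>g * (Y \<omega> - p \<omega>)\<bar>) \<partial>M)
    \<le> (\<integral>\<omega>. P \<omega> \<partial>M)"
proof -
  define W where "W \<omega> = P \<omega> * exp (- (g * (m \<omega> - p \<omega>)))" for \<omega>
  have W_F [measurable]: "W \<in> borel_measurable F"
    unfolding W_def by measurable
  have [measurable]: "W \<in> borel_measurable M" "p \<in> borel_measurable M"
    by (rule measurable_from_subalg[OF F], measurable)+
  have bounds: "\<bar>g * (Y \<omega> - p \<omega>)\<bar> < 1" "\<bar>g * (m \<omega> - p \<omega>)\<bar> \<le> 1" if "\<omega> \<in> space M" for \<omega>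
  proof -
    have "\<bar>Y \<omega> - p \<omega>\<bar> \<le> 1" "\<bar>m \<omega> - p \<omega>\<bar> \<le> 1"
      using range[OF that] by auto
    then show "\<bar>g * (Y \<omega> - p \<omega>)\<bar> < 1" "\<bar>g * (m \<omega> - p \<omega>)\<bar> \<le> 1"
      using g mult_left_le[of _ "\<bar>g\<bar>"] unfolding abs_mult by fastforce+
  qed
  have W: "0 \<le> W \<omega> \<and> W \<omega> \<le> B * exp 1" if "\<omega> \<in> space M" for \<omega>
    using P[OF that] bounds(2)[OF that] by (auto simp: W_def intro!: mult_mono)
  have "(\<integral>\<omega>. P \<omega> * exp (g * (Y \<omega> - m \<omega>) - psiE_real \<bar>g * (Y \<omega> - p \<omega>)\<bar>) \<partial>M)
      \<le> (\<integral>\<omega>. W \<omega> * (1 + g * (Y \<omega> - p \<omega>)) \<partial>M)"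
  proof (rule integral_mono')
    show "integrable M (\<lambda>\<omega>. W \<omega> * (1 + g * (Y \<omega> - p \<omega>)))"
    proof (rule integrable_mult_bounded_real[where B = "B * exp 1" and C = 2])
      show "\<bar>1 + g * (Y \<omega> - p \<omega>)\<bar> \<le> 2" if "\<omega> \<in> space M" for \<omega>
        using bounds(1)[OF that] by linarith
    qed (use W in auto)
    fix \<omega> assume \<omega>: "\<omega> \<in> space M"
    have "exp (g * (Y \<omega> - m \<omega>) - psiE_real \<bar>g * (Y \<omega> - p \<omega>)\<bar>)
        = exp (- (g * (m \<omega> - p \<omega>))) * exp (g * (Y \<omega> - p \<omega>) - psiE_real \<bar>g * (Y \<omega> - p \<omega>)\<bar>)"
      by (simp add: algebra_simps flip: exp_add)
    also have "\<dots> \<le> exp (- (g * (m \<omega> - p \<omega>))) * (1 + g * (Y \<omega> - p \<omega>))"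
      using exp_sub_psiE_real_le[OF bounds(1)[OF \<omega>]] by simp
    finally show "P \<omega> * exp (g * (Y \<omega> - m \<omega>) - psiE_real \<bar>g * (Y \<omega> - p \<omega>)\<bar>)
        \<le> W \<omega> * (1 + g * (Y \<omega> - p \<omega>))"
      using P[OF \<omega>] by (simp add: W_def mult.assoc mult_left_mono)
    show "0 \<le> W \<omega> * (1 + g * (Y \<omega> - p \<omega>))"
      using W[OF \<omega>] bounds(1)[OF \<omega>] by simp
  qed
  also have "\<dots> \<le> (\<integral>\<omega>. W \<omega> * exp (g * (m \<omega> - p \<omega>)) \<partial>M)"
    using g W range m_AE
    by (intro integral_affine_le_exp_cond_mean[OF F, where B = "B * exp 1"]) auto
  also have "\<dots> = (\<integral>\<omega>. P \<omega> \<partial>M)"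
    by (simp add: W_def mult.assoc flip: exp_add)
  finally show ?thesis .
qed

lemma space_nat_filtration [simp]: "space (nat_filtration M X n) = space M"
  by (simp add: nat_filtration_def space_measure_of_conv)

lemma sets_nat_filtration:
  "sets (nat_filtration M X n)
    = sigma_sets (space M) (\<Union>i\<in>{1..n}. {X i -` A \<inter> space M | A. A \<in> sets borel})"
  unfolding nat_filtration_def by (rule sets_measure_of) auto

lemma nat_filtration_mono:
  "j \<le> n \<Longrightarrow> sets (nat_filtration M X j) \<subseteq> sets (nat_filtration M X n)"
  unfolding sets_nat_filtration by (intro sigma_sets_mono' UN_mono) auto

lemma measurable_nat_filtration_mono:
  "f \<in> borel_measurable (nat_filtration M X j) \<Longrightarrow> j \<le> n
    \<Longrightarrow> f \<in> borel_measurable (nat_filtration M X n)"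
  by (rule measurable_from_subalg[of _ "nat_filtration M X j"])
    (auto simp: subalgebra_def nat_filtration_mono)

lemma measurable_nat_filtration:
  assumes "1 \<le> i" "i \<le> n"
  shows "X i \<in> borel_measurable (nat_filtration M X n)"
proof (rule measurableI)
  fix A :: "real set"
  assume "A \<in> sets borel"
  then show "X i -` A \<inter> space (nat_filtration M X n) \<in> sets (nat_filtration M X n)"
    using assms unfolding sets_nat_filtration by (intro sigma_sets.Basic UN_I[of i]) auto
qed auto

lemma subalgebra_nat_filtration:
  assumes "\<And>i. 1 \<le> i \<Longrightarrow> X i \<in> borel_measurable M"
  shows "subalgebra M (nat_filtration M X n)"
  unfolding subalgebra_def sets_nat_filtration using assms
  by (auto intro!: sets.sigma_sets_subset)

definition centered_sum :: "'a measure \<Rightarrow> (nat \<Rightarrow> 'a \<Rightarrow> real) \<Rightarrow> nat \<Rightarrow> 'a \<Rightarrow> real" where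
  "centered_sum M X t \<omega> =
     (\<Sum>i\<in>{1..t}. X i \<omega> - real_cond_exp M (nat_filtration M X (i - 1)) (X i) \<omega>)"

lemma emp_mean_minus_avg_cond_mean:
  "emp_mean X t \<omega> - avg_cond_mean M X t \<omega> = centered_sum M X t \<omega> / real t"
  by (simp add: emp_mean_def avg_cond_mean_def centered_sum_def sum_subtractf diff_divide_distrib)

lemma Vsum_eq_ereal_D:
  assumes "Vsum X Xh t \<omega> = ereal v"
  shows "\<forall>i\<in>{1..t}. \<bar>X i \<omega> - Xh i \<omega>\<bar> < 1"
    and "v = (\<Sum>i\<in>{1..t}. psiE_real \<bar>X i \<omega> - Xh i \<omega>\<bar>)"
proof -
  show less: "\<forall>i\<in>{1..t}. \<bar>X i \<omega> - Xh i \<omega>\<bar> < 1"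
  proof (rule ccontr)
    assume "\<not> ?thesis"
    then have "Vsum X Xh t \<omega> = \<infinity>"
      unfolding Vsum_def by (subst sum_Pinfty) (auto simp: psiE_def)
    then show False
      using assms by simp
  qed
  have "Vsum X Xh t \<omega> = (\<Sum>i\<in>{1..t}. ereal (psiE_real \<bar>X i \<omega> - Xh i \<omega>\<bar>))"
    unfolding Vsum_def using less by (intro sum.cong) (auto simp: psiE_eq_psiE_real)
  then show "v = (\<Sum>i\<in>{1..t}. psiE_real \<bar>X i \<omega> - Xh i \<omega>\<bar>)"
    using assms by simp
qed

lemma sum_psiE_real_mult_le_Vsum:
  assumes V: "Vsum X Xh t \<omega> = ereal v" and g: "\<bar>g\<bar> \<le> 1"
  shows "(\<Sum>i\<in>{1..t}. psiE_real \<bar>g * (X i \<omega> - Xh i \<omega>)\<bar>) \<le> g\<^sup>2 * v"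
proof -
  have "psiE_real (\<bar>g\<bar> * \<bar>X i \<omega> - Xh i \<omega>\<bar>) \<le> \<bar>g\<bar>\<^sup>2 * psiE_real \<bar>X i \<omega> - Xh i \<omega>\<bar>"
    if "i \<in> {1..t}" for i
    using Vsum_eq_ereal_D(1)[OF V] that g by (intro psiE_real_mult_le) auto
  then have "(\<Sum>i\<in>{1..t}. psiE_real \<bar>g * (X i \<omega> - Xh i \<omega>)\<bar>)
      \<le> (\<Sum>i\<in>{1..t}. g\<^sup>2 * psiE_real \<bar>X i \<omega> - Xh i \<omega>\<bar>)"
    unfolding abs_mult by (intro sum_mono) simp
  also have "\<dots> = g\<^sup>2 * v"
    by (simp add: Vsum_eq_ereal_D(2)[OF V] sum_distrib_left)
  finally show ?thesis .
qed

locale bounded_forecasts = prob_space M for M :: "'a measure" +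
  fixes X Xh :: "nat \<Rightarrow> 'a \<Rightarrow> real"
  assumes X_measurable: "\<And>t. 1 \<le> t \<Longrightarrow> X t \<in> borel_measurable M"
    and X_range: "\<And>t \<omega>. 1 \<le> t \<Longrightarrow> \<omega> \<in> space M \<Longrightarrow> X t \<omega> \<in> {0..1}"
    and Xh_predictable: "\<And>t. 1 \<le> t \<Longrightarrow> Xh t \<in> borel_measurable (nat_filtration M X (t - 1))"
    and Xh_range: "\<And>t \<omega>. 1 \<le> t \<Longrightarrow> \<omega> \<in> space M \<Longrightarrow> Xh t \<omega> \<in> {0..1}"
begin

lemma subalgebra_filtration: "subalgebra M (nat_filtration M X n)"
  using subalgebra_nat_filtration X_measurable by blast

lemma measurable_filtration_imp_measurable:
  "f \<in> borel_measurable (nat_filtration M X n) \<Longrightarrow> f \<in> borel_measurable M"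
  by (rule measurable_from_subalg[OF subalgebra_filtration])

text \<open>The conditional mean lies in \<open>[0,1]\<close> only almost surely; clipping gives a version
  with values in \<open>[0,1]\<close> everywhere, which makes \<open>fan_process\<close> bounded.\<close>
definition clipped_cond_mean :: "nat \<Rightarrow> 'a \<Rightarrow> real" where
  "clipped_cond_mean i \<omega> = max 0 (min 1 (real_cond_exp M (nat_filtration M X (i - 1)) (X i) \<omega>))"

lemma clipped_cond_mean_measurable:
  "clipped_cond_mean i \<in> borel_measurable (nat_filtration M X (i - 1))"
  unfolding clipped_cond_mean_def by measurable

lemma clipped_cond_mean_range: "clipped_cond_mean i \<omega> \<in> {0..1}"
  by (simp add: clipped_cond_mean_def)

lemma AE_clipped_cond_mean:
  assumes "1 \<le> i"
  shows "AE \<omega> in M. clipped_cond_mean i \<omega> = real_cond_exp M (nat_filtration M X (i - 1)) (X i) \<omega>"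
proof -
  interpret F: sigma_finite_subalgebra M "nat_filtration M X (i - 1)"
    using subalgebra_filtration by (rule sigma_finite_subalgebra_of_subalgebra)
  have "integrable M (X i)"
    using assms X_measurable X_range by (intro integrable_bounded_real[where B = 1]) auto
  then have "AE \<omega> in M. 0 \<le> real_cond_exp M (nat_filtration M X (i - 1)) (X i) \<omega>"
    and "AE \<omega> in M. real_cond_exp M (nat_filtration M X (i - 1)) (X i) \<omega> \<le> 1"
    using assms X_range by (intro F.real_cond_exp_ge_c F.real_cond_exp_le_c; simp)+
  then show ?thesis
    by eventually_elim (simp add: clipped_cond_mean_def)
qed

definition fan_process :: "real \<Rightarrow> nat \<Rightarrow> 'a \<Rightarrow> real" where
  "fan_process g n \<omega> = exp (\<Sum>i\<in>{1..n}.
     g * (X i \<omega> - clipped_cond_mean i \<omega>) - psiE_real \<bar>g * (X i \<omega> - Xh i \<omega>)\<bar>)"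

lemma fan_process_0: "fan_process g 0 \<omega> = 1"
  by (simp add: fan_process_def)

lemma fan_process_Suc:
  "fan_process g (Suc n) \<omega> = fan_process g n \<omega> * exp (g * (X (Suc n) \<omega> - clipped_cond_mean (Suc n) \<omega>)
     - psiE_real \<bar>g * (X (Suc n) \<omega> - Xh (Suc n) \<omega>)\<bar>)"
  by (simp add: fan_process_def atLeastAtMostSuc_conv exp_add)

lemma fan_process_measurable: "fan_process g n \<in> borel_measurable (nat_filtration M X n)"
proof -
  have [measurable]: "X i \<in> borel_measurable (nat_filtration M X n)"
    "Xh i \<in> borel_measurable (nat_filtration M X n)"
    "clipped_cond_mean i \<in> borel_measurable (nat_filtration M X n)"
    if "i \<in> {1..n}" for i
    using that measurable_nat_filtration
      measurable_nat_filtration_mono[OF Xh_predictable, of i n]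
      measurable_nat_filtration_mono[OF clipped_cond_mean_measurable, of i n]
    by auto
  show ?thesis
    unfolding fan_process_def psiE_real_def by measurable
qed

lemma fan_process_le:
  assumes g: "\<bar>g\<bar> < 1" and \<omega>: "\<omega> \<in> space M"
  shows "fan_process g n \<omega> \<le> exp n"
proof -
  have "g * (X i \<omega> - clipped_cond_mean i \<omega>) - psiE_real \<bar>g * (X i \<omega> - Xh i \<omega>)\<bar> \<le> 1"
    if "i \<in> {1..n}" for i
  proof -
    have "\<bar>X i \<omega> - clipped_cond_mean i \<omega>\<bar> \<le> 1" "\<bar>X i \<omega> - Xh i \<omega>\<bar> \<le> 1"
      using that X_range[of i \<omega>] Xh_range[of i \<omega>] clipped_cond_mean_range[of i \<omega>] \<omega> by auto
    then have "\<bar>g * (X i \<omega> - clipped_cond_mean i \<omega>)\<bar> \<le> \<bar>g\<bar>" "\<bar>g * (X i \<omega> - Xh i \<omega>)\<bar> \<le> \<bar>g\<bar>"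
      unfolding abs_mult by (simp_all add: mult_left_le)
    then show ?thesis
      using g psiE_real_nonneg[of "\<bar>g * (X i \<omega> - Xh i \<omega>)\<bar>"]
        abs_ge_self[of "g * (X i \<omega> - clipped_cond_mean i \<omega>)"]
      by linarith
  qed
  then have "(\<Sum>i\<in>{1..n}. g * (X i \<omega> - clipped_cond_mean i \<omega>) - psiE_real \<bar>g * (X i \<omega> - Xh i \<omega>)\<bar>)
      \<le> of_nat (card {1..n}) * 1"
    by (rule sum_bounded_above)
  then show ?thesis
    unfolding fan_process_def by simp
qed

lemma integrable_fan_process:
  "\<bar>g\<bar> < 1 \<Longrightarrow> integrable M (fan_process g n)"
  using fan_process_le measurable_filtration_imp_measurable[OF fan_process_measurable]
  by (intro integrable_bounded_real[where B = "exp n"]) (auto simp: fan_process_def)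

lemma fan_process_supermartingale:
  assumes g: "\<bar>g\<bar> < 1" and D: "D \<in> sets (nat_filtration M X n)"
  shows "(\<integral>\<omega>. indicator D \<omega> * fan_process g (Suc n) \<omega> \<partial>M)
    \<le> (\<integral>\<omega>. indicator D \<omega> * fan_process g n \<omega> \<partial>M)"
proof -
  have [measurable]: "X (Suc n) \<in> borel_measurable M"
    "Xh (Suc n) \<in> borel_measurable (nat_filtration M X n)"
    "clipped_cond_mean (Suc n) \<in> borel_measurable (nat_filtration M X n)"
    "fan_process g n \<in> borel_measurable (nat_filtration M X n)"
    "D \<in> sets (nat_filtration M X n)"
    using X_measurable[of "Suc n"] Xh_predictable[of "Suc n"]
      clipped_cond_mean_measurable[of "Suc n"] fan_process_measurable D
    by simp_all
  have "(\<integral>\<omega>. indicator D \<omega> * fan_process g (Suc n) \<omega> \<partial>M)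
      = (\<integral>\<omega>. (indicator D \<omega> * fan_process g n \<omega>)
          * exp (g * (X (Suc n) \<omega> - clipped_cond_mean (Suc n) \<omega>)
             - psiE_real \<bar>g * (X (Suc n) \<omega> - Xh (Suc n) \<omega>)\<bar>) \<partial>M)"
    by (simp add: fan_process_Suc mult.assoc)
  also have "\<dots> \<le> (\<integral>\<omega>. indicator D \<omega> * fan_process g n \<omega> \<partial>M)"
  proof (rule integral_mult_exp_fan_le[OF subalgebra_filtration])
    show "AE \<omega> in M. clipped_cond_mean (Suc n) \<omega>
        = real_cond_exp M (nat_filtration M X n) (X (Suc n)) \<omega>"
      using AE_clipped_cond_mean[of "Suc n"] by simp
    show "0 \<le> indicator D \<omega> * fan_process g n \<omega> \<and> indicator D \<omega> * fan_process g n \<omega> \<le> exp n"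
      if "\<omega> \<in> space M" for \<omega>
      using fan_process_le[OF g that] by (auto simp: indicator_def fan_process_def)
    show "X (Suc n) \<omega> \<in> {0..1} \<and> clipped_cond_mean (Suc n) \<omega> \<in> {0..1} \<and> Xh (Suc n) \<omega> \<in> {0..1}"
      if "\<omega> \<in> space M" for \<omega>
      using X_range[OF _ that] Xh_range[OF _ that] clipped_cond_mean_range by simp
  qed (use g in measurable)
  finally show ?thesis .
qed

lemma clipped_cond_mean_eq_off_null_set:
  "\<exists>N\<in>null_sets M. \<forall>\<omega>\<in>space M - N. \<forall>i\<ge>1.
    clipped_cond_mean i \<omega> = real_cond_exp M (nat_filtration M X (i - 1)) (X i) \<omega>"
proof -
  have "AE \<omega> in M. \<forall>i. 1 \<le> i \<longrightarrow>
      clipped_cond_mean i \<omega> = real_cond_exp M (nat_filtration M X (i - 1)) (X i) \<omega>"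
  proof (unfold AE_all_countable, intro allI)
    show "AE \<omega> in M. 1 \<le> i \<longrightarrow>
        clipped_cond_mean i \<omega> = real_cond_exp M (nat_filtration M X (i - 1)) (X i) \<omega>" for i
      using AE_clipped_cond_mean[of i] by (cases "1 \<le> i") simp_all
  qed
  then show ?thesis
    by (elim AE_E) (auto intro: null_setsI)
qed

lemma fan_process_eq_exp_centered_sum:
  assumes "\<forall>i\<ge>1. clipped_cond_mean i \<omega> = real_cond_exp M (nat_filtration M X (i - 1)) (X i) \<omega>"
  shows "fan_process g t \<omega>
    = exp (g * centered_sum M X t \<omega> - (\<Sum>i\<in>{1..t}. psiE_real \<bar>g * (X i \<omega> - Xh i \<omega>)\<bar>))"
proof -
  have "(\<Sum>i\<in>{1..t}. g * (X i \<omega> - clipped_cond_mean i \<omega>)) = g * centered_sum M X t \<omega>"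
    using assms unfolding centered_sum_def sum_distrib_left by (intro sum.cong) simp_all
  then show ?thesis
    by (simp add: fan_process_def sum_subtractf)
qed

lemma fan_process_crossing:
  assumes g: "\<bar>g\<bar> < 1" and c: "0 < c"
  shows "measure M {\<omega>\<in>space M. \<exists>n. c \<le> fan_process g n \<omega>} \<le> 1 / c"
proof -
  interpret nonneg_supermartingale M "nat_filtration M X" "fan_process g"
  proof
    show "sets (nat_filtration M X n) \<subseteq> sets (nat_filtration M X (Suc n))" for n
      by (rule nat_filtration_mono) simp
    show "0 \<le> fan_process g n \<omega>" for n \<omega>
      by (simp add: fan_process_def)
  qed (use g subalgebra_filtration fan_process_measurable integrable_fan_process
      fan_process_supermartingale in simp_all)
  show ?thesis
    using c by (intro ville_inequality) (simp_all add: fan_process_0 prob_space)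
qed

lemma crossing_event:
  assumes g: "\<bar>g\<bar> < 1" and c: "0 < c"
  shows "\<exists>A\<in>sets M. measure M A \<le> 1 / c \<and> (\<forall>\<omega>\<in>space M - A. \<forall>t v.
    Vsum X Xh t \<omega> = ereal v \<longrightarrow> g * centered_sum M X t \<omega> < ln c + g\<^sup>2 * v)"
proof -
  define C where "C = {\<omega>\<in>space M. \<exists>n. c \<le> fan_process g n \<omega>}"
  have [measurable]: "fan_process g n \<in> borel_measurable M" for n
    by (rule measurable_filtration_imp_measurable[OF fan_process_measurable])
  have C_M: "C \<in> sets M"
    unfolding C_def by (intro sets.sets_Collect_countable_Ex) simp
  obtain N where N_null: "N \<in> null_sets M" and clipped_eq: "\<And>\<omega>. \<omega> \<in> space M - N \<Longrightarrow> \<forall>i\<ge>1.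
      clipped_cond_mean i \<omega> = real_cond_exp M (nat_filtration M X (i - 1)) (X i) \<omega>"
    using clipped_cond_mean_eq_off_null_set by blast
  show ?thesis
  proof (intro bexI[of _ "C \<union> N"] conjI ballI allI impI)
    show "C \<union> N \<in> sets M"
      using C_M N_null by auto
    show "measure M (C \<union> N) \<le> 1 / c"
      using fan_process_crossing[OF g c] C_M N_null by (simp add: C_def measure_Un_null_set)
    fix \<omega> t v
    assume \<omega>: "\<omega> \<in> space M - (C \<union> N)" and V: "Vsum X Xh t \<omega> = ereal v"
    have "exp (g * centered_sum M X t \<omega> - (\<Sum>i\<in>{1..t}. psiE_real \<bar>g * (X i \<omega> - Xh i \<omega>)\<bar>)) < c"
      using \<omega> fan_process_eq_exp_centered_sum[OF clipped_eq] by (auto simp: C_def not_le)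
    then have "g * centered_sum M X t \<omega> - (\<Sum>i\<in>{1..t}. psiE_real \<bar>g * (X i \<omega> - Xh i \<omega>)\<bar>) < ln c"
      using c by (metis exp_gt_zero ln_exp ln_less_cancel_iff)
    then show "g * centered_sum M X t \<omega> < ln c + g\<^sup>2 * v"
      using sum_psiE_real_mult_le_Vsum[OF V less_imp_le[OF g]] by linarith
  qed
qed

lemma two_sided_crossing_event:
  assumes l: "0 \<le> l" and c: "0 < c"
  shows "\<exists>A\<in>sets M. measure M A \<le> 2 / c \<and> (\<forall>\<omega>\<in>space M - A. \<forall>t v.
    Vsum X Xh t \<omega> = ereal v \<longrightarrow> l < 1 \<longrightarrow> l * \<bar>centered_sum M X t \<omega>\<bar> < ln c + l\<^sup>2 * v)"
proof (cases "l < 1")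
  case True
  obtain A where A: "A \<in> sets M" "measure M A \<le> 1 / c" and A_bound: "\<And>\<omega> t v. \<omega> \<in> space M - A
      \<Longrightarrow> Vsum X Xh t \<omega> = ereal v \<Longrightarrow> l * centered_sum M X t \<omega> < ln c + l\<^sup>2 * v"
    using crossing_event[of l c] True l c by auto
  obtain B where B: "B \<in> sets M" "measure M B \<le> 1 / c" and B_bound: "\<And>\<omega> t v. \<omega> \<in> space M - B
      \<Longrightarrow> Vsum X Xh t \<omega> = ereal v \<Longrightarrow> - l * centered_sum M X t \<omega> < ln c + (- l)\<^sup>2 * v"
    using crossing_event[of "- l" c] True l c by auto
  show ?thesis
  proof (intro bexI[of _ "A \<union> B"] conjI ballI allI impI)
    show "measure M (A \<union> B) \<le> 2 / c"
      using measure_Un_le[OF A(1) B(1)] A(2) B(2) by simp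
    fix \<omega> t v
    assume "\<omega> \<in> space M - (A \<union> B)" "Vsum X Xh t \<omega> = ereal v"
    then show "l * \<bar>centered_sum M X t \<omega>\<bar> < ln c + l\<^sup>2 * v"
      using A_bound[of \<omega> t v] B_bound[of \<omega> t v] by (auto simp: abs_if)
  qed (use A B in auto)
next
  case False
  then show ?thesis
    using c by (intro bexI[of _ "{}"]) auto
qed

lemma simultaneous_crossing_event:
  assumes l: "\<And>k. 0 \<le> l k" and c: "\<And>k. 0 < c k" and summable: "summable (\<lambda>k. 1 / c k)"
  obtains A where "A \<in> sets M" "measure M A \<le> 2 * (\<Sum>k. 1 / c k)"
    "\<And>\<omega> k t v. \<omega> \<in> space M - A \<Longrightarrow> Vsum X Xh t \<omega> = ereal v \<Longrightarrow> l k < 1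
      \<Longrightarrow> l k * \<bar>centered_sum M X t \<omega>\<bar> < ln (c k) + (l k)\<^sup>2 * v"
proof -
  have "\<exists>A\<in>sets M. measure M A \<le> 2 / c k \<and> (\<forall>\<omega>\<in>space M - A. \<forall>t v.
      Vsum X Xh t \<omega> = ereal v \<longrightarrow> l k < 1 \<longrightarrow> l k * \<bar>centered_sum M X t \<omega>\<bar> < ln (c k) + (l k)\<^sup>2 * v)"
    for k
    by (rule two_sided_crossing_event[OF l c])
  then obtain A where A: "\<And>k. A k \<in> sets M" "\<And>k. measure M (A k) \<le> 2 / c k"
    and A_bound: "\<And>k \<omega> t v. \<omega> \<in> space M - A k \<Longrightarrow> Vsum X Xh t \<omega> = ereal v \<Longrightarrow> l k < 1
      \<Longrightarrow> l k * \<bar>centered_sum M X t \<omega>\<bar> < ln (c k) + (l k)\<^sup>2 * v"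
    by metis
  have "measure M (\<Union>k. A k) \<le> (\<Sum>k. 2 / c k)"
    by (rule measure_UN_le_suminf[OF A]) (use summable_mult[OF summable, of 2] in simp)
  also have "\<dots> = 2 * (\<Sum>k. 1 / c k)"
    using suminf_mult[OF summable, of 2] by simp
  finally show ?thesis
    using A A_bound by (intro that[of "\<Union>k. A k"]) auto
qed

end

section \<open>Stitching the epochs\<close>

lemma one_le_of_suminf_inverse_le_one:
  fixes f :: "nat \<Rightarrow> real"
  assumes pos: "\<And>j. 0 < f j" and summable: "summable (\<lambda>j. 1 / f j)"
    and le_one: "(\<Sum>j. 1 / f j) \<le> 1"
  shows "1 \<le> f j"
proof -
  have "1 / f j \<le> (\<Sum>j. 1 / f j)"
    using sum_le_suminf[OF summable, of "{j}"] pos by (simp add: less_imp_le)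
  then have "1 / f j \<le> 1"
    using le_one by linarith
  then show ?thesis
    using pos[of j] by (simp add: divide_le_eq_1)
qed

lemma epoch_thresholds:
  fixes h :: "real \<Rightarrow> real" and \<alpha> :: real
  assumes h_pos: "\<And>x. 0 \<le> x \<Longrightarrow> 0 < h x" and h_summable: "summable (\<lambda>j. 1 / h (real j))"
    and h_sum: "(\<Sum>j. 1 / h (real j)) \<le> 1" and \<alpha>: "0 < \<alpha>" "\<alpha> < 2"
  shows "1 < 2 * h (real k) / \<alpha>" and "summable (\<lambda>k. 1 / (2 * h (real k) / \<alpha>))"
    and "2 * (\<Sum>k. 1 / (2 * h (real k) / \<alpha>)) \<le> \<alpha>"
proof -
  have "1 \<le> h (real k)"
    using one_le_of_suminf_inverse_le_one[of "\<lambda>j. h (real j)"] h_pos h_summable h_sum by simp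
  then show "1 < 2 * h (real k) / \<alpha>"
    using \<alpha> by (simp add: field_simps)
  have inverse: "(\<lambda>k. 1 / (2 * h (real k) / \<alpha>)) = (\<lambda>k. \<alpha> / 2 * (1 / h (real k)))"
    by simp
  show "summable (\<lambda>k. 1 / (2 * h (real k) / \<alpha>))"
    unfolding inverse by (rule summable_mult[OF h_summable])
  have "2 * (\<Sum>k. 1 / (2 * h (real k) / \<alpha>)) = \<alpha> * (\<Sum>k. 1 / h (real k))"
    unfolding inverse suminf_mult[OF h_summable] by simp
  also have "\<dots> \<le> \<alpha>"
    using h_sum \<alpha> by (simp add: mult_left_le)
  finally show "2 * (\<Sum>k. 1 / (2 * h (real k) / \<alpha>)) \<le> \<alpha>" .
qed

lemma floor_log_bounds:
  fixes b y :: real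
  assumes b: "1 < b" and y: "1 \<le> y"
  shows "b ^ nat \<lfloor>log b y\<rfloor> \<le> y" and "y < b ^ Suc (nat \<lfloor>log b y\<rfloor>)"
proof -
  have "0 \<le> log b y"
    using b y by simp
  then have "real (nat \<lfloor>log b y\<rfloor>) \<le> log b y" "log b y < real (Suc (nat \<lfloor>log b y\<rfloor>))"
    by linarith+
  moreover have "0 < y"
    using y by simp
  ultimately have "b powr real (nat \<lfloor>log b y\<rfloor>) \<le> y" "y < b powr real (Suc (nat \<lfloor>log b y\<rfloor>))"
    using le_log_iff log_less_iff b by blast+
  then show "b ^ nat \<lfloor>log b y\<rfloor> \<le> y" "y < b ^ Suc (nat \<lfloor>log b y\<rfloor>)"
    using b by (simp_all only: powr_realpow)
qed

lemma epoch_bounds: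
  fixes \<eta> L0 v :: real
  assumes \<eta>: "1 < \<eta>" and L0: "0 < L0" "L0 \<le> v"
  shows "0 \<le> log \<eta> (v / L0)" "real (nat \<lfloor>log \<eta> (v / L0)\<rfloor>) \<le> log \<eta> (v / L0)"
    "v < L0 * \<eta> ^ Suc (nat \<lfloor>log \<eta> (v / L0)\<rfloor>)" "L0 * \<eta> ^ Suc (nat \<lfloor>log \<eta> (v / L0)\<rfloor>) \<le> \<eta> * v"
proof -
  have "1 \<le> v / L0"
    using L0 by simp
  then show "0 \<le> log \<eta> (v / L0)" "real (nat \<lfloor>log \<eta> (v / L0)\<rfloor>) \<le> log \<eta> (v / L0)"
    using \<eta> by auto
  have "\<eta> ^ nat \<lfloor>log \<eta> (v / L0)\<rfloor> \<le> v / L0" "v / L0 < \<eta> ^ Suc (nat \<lfloor>log \<eta> (v / L0)\<rfloor>)"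
    using floor_log_bounds[OF \<eta> \<open>1 \<le> v / L0\<close>] by simp_all
  then show "v < L0 * \<eta> ^ Suc (nat \<lfloor>log \<eta> (v / L0)\<rfloor>)"
    "L0 * \<eta> ^ Suc (nat \<lfloor>log \<eta> (v / L0)\<rfloor>) \<le> \<eta> * v"
    using L0 \<eta> by (simp_all add: field_simps)
qed

lemma abs_le_of_tuned_rate_bound:
  fixes S v ell lx Q \<eta> :: real
  assumes ell: "0 \<le> ell" "ell \<le> lx" "lx \<le> v" and Q: "v < Q" "Q \<le> \<eta> * v"
    and bound: "sqrt (ell / Q) * \<bar>S\<bar> < ell + (sqrt (ell / Q))\<^sup>2 * v"
  shows "\<bar>S\<bar> \<le> (sqrt \<eta> + 1) * sqrt (v * lx)"
proof -
  define r where "r = sqrt (ell / Q)"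
  have "ell \<noteq> 0"
    using bound by auto
  then have pos: "0 < ell" "0 < v" "0 < Q" "0 < r"
    using ell Q by (auto simp: r_def)
  have "\<bar>S\<bar> < ell / r + r * v"
    using bound pos by (simp add: r_def[symmetric] field_simps power2_eq_square)
  also have "ell / r = sqrt (ell * Q)"
    using pos by (simp add: r_def real_sqrt_divide real_sqrt_mult field_simps)
  also have "\<dots> \<le> sqrt (\<eta> * (v * lx))"
    using ell Q pos mult_mono[of ell lx Q "\<eta> * v"] by (simp add: mult_ac)
  also have "r * v = sqrt (ell / Q * v\<^sup>2)"
    using pos by (simp only: r_def real_sqrt_mult real_sqrt_abs abs_of_pos)
  also have "\<dots> \<le> sqrt (v * lx)"
  proof (rule real_sqrt_le_mono)
    have "ell / Q * v\<^sup>2 = ell * v * (v / Q)"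
      by (simp add: power2_eq_square)
    also have "\<dots> \<le> lx * v * 1"
      using ell Q pos by (intro mult_mono) auto
    finally show "ell / Q * v\<^sup>2 \<le> v * lx"
      by (simp add: mult.commute)
  qed
  finally show ?thesis
    by (simp add: real_sqrt_mult algebra_simps)
qed

lemma stitched_bound:
  fixes h :: "real \<Rightarrow> real" and S v \<alpha> \<eta> L0 :: real
  assumes h_mono: "mono_on {0..} h" and h_ge: "\<And>k::nat. 1 \<le> 2 * h (real k) / \<alpha>"
    and \<eta>: "1 < \<eta>" and \<alpha>: "0 < \<alpha>" and L0: "0 < L0" "L0 \<le> v"
    and hv: "h (log \<eta> (v / L0)) \<le> \<alpha> / 2 * exp v"
    and bounds: "\<And>k::nat. sqrt (ln (2 * h (real k) / \<alpha>) / (L0 * \<eta> ^ Suc k)) < 1 \<Longrightarrow>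
      sqrt (ln (2 * h (real k) / \<alpha>) / (L0 * \<eta> ^ Suc k)) * \<bar>S\<bar>
        < ln (2 * h (real k) / \<alpha>) + (sqrt (ln (2 * h (real k) / \<alpha>) / (L0 * \<eta> ^ Suc k)))\<^sup>2 * v"
  shows "\<bar>S\<bar> \<le> (sqrt \<eta> + 1) * sqrt (v * (ln (2 / \<alpha>) + ln (h (log \<eta> (v / L0)))))"
proof -
  define x where "x = log \<eta> (v / L0)"
  define k where "k = nat \<lfloor>x\<rfloor>"
  define ell where "ell = ln (2 * h (real k) / \<alpha>)"
  define Q where "Q = L0 * \<eta> ^ Suc k"
  have Q: "v < Q" "Q \<le> \<eta> * v" and "0 \<le> x" "real k \<le> x"
    using epoch_bounds[OF \<eta> L0] by (simp_all add: Q_def k_def x_def)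
  then have h_k_x: "h (real k) \<le> h x"
    by (intro mono_onD[OF h_mono]) simp_all
  have one_le: "1 \<le> 2 * h (real k) / \<alpha>"
    by (rule h_ge)
  have ell: "0 \<le> ell" "ell \<le> ln (2 * h x / \<alpha>)" "ln (2 * h x / \<alpha>) \<le> v"
  proof -
    show "0 \<le> ell"
      using one_le by (simp add: ell_def)
    have "2 * h (real k) / \<alpha> \<le> 2 * h x / \<alpha>"
      using h_k_x \<alpha> by (simp add: divide_right_mono)
    then show "ell \<le> ln (2 * h x / \<alpha>)"
      unfolding ell_def using one_le by (subst ln_le_cancel_iff) auto
    have "2 * h x / \<alpha> \<le> exp v"
      using hv \<alpha> by (simp add: x_def field_simps)
    then have "ln (2 * h x / \<alpha>) \<le> ln (exp v)"
      using \<open>2 * h (real k) / \<alpha> \<le> 2 * h x / \<alpha>\<close> one_le by (subst ln_le_cancel_iff) auto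
    then show "ln (2 * h x / \<alpha>) \<le> v"
      by simp
  qed
  have "sqrt (ell / Q) < 1"
    using ell Q by simp
  then have "\<bar>S\<bar> \<le> (sqrt \<eta> + 1) * sqrt (v * ln (2 * h x / \<alpha>))"
    using bounds[of k] by (intro abs_le_of_tuned_rate_bound[OF ell Q]) (simp_all add: ell_def Q_def)
  moreover have "ln (2 * h x / \<alpha>) = ln (2 / \<alpha>) + ln (h x)"
  proof -
    have "\<alpha> \<le> 2 * h (real k)"
      using one_le \<alpha> by (simp add: field_simps)
    then have "0 < h x"
      using h_k_x \<alpha> by linarith
    then have "ln (2 / \<alpha> * h x) = ln (2 / \<alpha>) + ln (h x)"
      using \<alpha> by (intro ln_mult_pos) auto
    then show ?thesis
      by simp
  qed
  ultimately show ?thesis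
    by (simp add: x_def)
qed

theorem mainTheorem6:
  fixes M :: "'a measure" and X Xh :: "nat \<Rightarrow> 'a \<Rightarrow> real"
    and h :: "real \<Rightarrow> real" and \<eta> \<alpha> L0 :: real
  assumes "prob_space M"
    and X_meas: "\<And>t. t \<ge> 1 \<Longrightarrow> X t \<in> borel_measurable M"
    and X_range: "\<And>t \<omega>. t \<ge> 1 \<Longrightarrow> \<omega> \<in> space M \<Longrightarrow> X t \<omega> \<in> {0..1}"
    and Xh_pred: "\<And>t. t \<ge> 1 \<Longrightarrow> Xh t \<in> borel_measurable (nat_filtration M X (t - 1))"
    and Xh_range: "\<And>t \<omega>. t \<ge> 1 \<Longrightarrow> \<omega> \<in> space M \<Longrightarrow> Xh t \<omega> \<in> {0..<1}"
    and h_pos: "\<And>x. x \<ge> 0 \<Longrightarrow> h x > 0"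
    and h_mono: "mono_on {0..} h"
    and h_summable: "summable (\<lambda>j. 1 / h (real j))"
    and h_sum: "(\<Sum>j. 1 / h (real j)) \<le> 1"
    and \<eta>: "\<eta> > 1" and \<alpha>: "0 < \<alpha>" "\<alpha> < 1" and L0: "L0 \<ge> 1"
  shows "\<exists>A \<in> sets M. measure M A \<ge> 1 - \<alpha> \<and>
     (\<forall>\<omega>\<in>A. \<forall>t\<ge>1. \<forall>v::real.
        Vsum X Xh t \<omega> = ereal v \<longrightarrow> L0 \<le> v \<longrightarrow>
        h (log \<eta> (v / L0)) \<le> \<alpha> / 2 * exp v \<longrightarrow>
        \<bar>emp_mean X t \<omega> - avg_cond_mean M X t \<omega>\<bar>
          \<le> (sqrt \<eta> + 1) / real t * sqrt (v * (ln (2 / \<alpha>) + ln (h (log \<eta> (v / L0))))))"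
proof -
  interpret bounded_forecasts M X Xh
    unfolding bounded_forecasts_def bounded_forecasts_axioms_def
    using assms(1) X_meas X_range Xh_pred Xh_range by fastforce
  have "\<alpha> < 2"
    using \<alpha> by simp
  note thresholds = epoch_thresholds[OF h_pos h_summable h_sum \<alpha>(1) this]
  define c where "c k = 2 * h (real k) / \<alpha>" for k :: nat
  define l where "l k = sqrt (ln (c k) / (L0 * \<eta> ^ Suc k))" for k :: nat
  have l_nonneg: "0 \<le> l k" and c_pos: "0 < c k" for k
    using thresholds(1)[of k] L0 \<eta> by (simp_all add: l_def c_def)
  have summable_c: "summable (\<lambda>k. 1 / c k)" and sum_c: "2 * (\<Sum>k. 1 / c k) \<le> \<alpha>"
    using thresholds(2,3) by (simp_all add: c_def)
  obtain A where A: "A \<in> sets M" "measure M A \<le> 2 * (\<Sum>k. 1 / c k)"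
    and A_bound: "\<And>\<omega> k t v. \<omega> \<in> space M - A \<Longrightarrow> Vsum X Xh t \<omega> = ereal v \<Longrightarrow> l k < 1
      \<Longrightarrow> l k * \<bar>centered_sum M X t \<omega>\<bar> < ln (c k) + (l k)\<^sup>2 * v"
    using simultaneous_crossing_event[of l c, OF l_nonneg c_pos summable_c] by blast
  show ?thesis
  proof (intro bexI[of _ "space M - A"] conjI ballI allI impI)
    show "1 - \<alpha> \<le> measure M (space M - A)"
      using A sum_c by (subst prob_compl) auto
    fix \<omega> t v
    assume \<omega>: "\<omega> \<in> space M - A" and t: "1 \<le> t" and V: "Vsum X Xh t \<omega> = ereal v"
      and "L0 \<le> v" and "h (log \<eta> (v / L0)) \<le> \<alpha> / 2 * exp v"
    then have "\<bar>centered_sum M X t \<omega>\<bar>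
        \<le> (sqrt \<eta> + 1) * sqrt (v * (ln (2 / \<alpha>) + ln (h (log \<eta> (v / L0)))))"
      using A_bound[OF \<omega> V] L0
      by (intro stitched_bound[OF h_mono thresholds(1)[THEN less_imp_le] \<eta> \<alpha>(1)])
        (auto simp: l_def c_def)
    then show "\<bar>emp_mean X t \<omega> - avg_cond_mean M X t \<omega>\<bar>
        \<le> (sqrt \<eta> + 1) / real t * sqrt (v * (ln (2 / \<alpha>) + ln (h (log \<eta> (v / L0)))))"
      using t by (simp add: emp_mean_minus_avg_cond_mean divide_right_mono)
  qed (use A in auto)
qed

end
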